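(* Let $n$ be a positive integer and let $D(n)=[d_{i,j}]_{i,j=1}^n$ be the matrix with $d_{i,j}=F_i$ if $i\mid j$ and $d_{i,j}=0$ otherwise. Then $D(n)$ is invertible and $D(n)^{-1}=[\tilde d_{i,j}]_{i,j=1}^n$, where \[ \tilde d_{i,j}=\begin{cases}\dfrac{1}{F_j}\,\mu\!\left(\dfrac{j}{i}\right) & \text{if } i\mid j,\\[2mm] 0 & \text{otherwise}.\end{cases} \]
   Context: The Fibonacci numbers are $F_1=F_2=1$, $F_n=F_{n-1}+F_{n-2}$ for $n\ge 3$. $\mu$ denotes the Möbius function: $\mu(1)=1$, $\mu(j)=0$ if $j$ has a repeated prime factor, and $\mu(j)=(-1)^k$ if $j$ is a product of $k$ distinct primes. *)

theory Defs
  imports "Jordan_Normal_Form.Matrix" "HOL-Number_Theory.Fib" "HOL-Computational_Algebra.Squarefree"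
begin

definition moebius :: "nat \<Rightarrow> int" where
  "moebius j = (if squarefree j then (-1) ^ card (prime_factors j) else 0)"

text \<open>D(n): 1-based entries d_{i,j} = F_i if i dvd j, else 0; stored 0-based.\<close>
definition Dmat :: "nat \<Rightarrow> real mat" where
  "Dmat n = mat n n (\<lambda>(i, j). if Suc i dvd Suc j then real (fib (Suc i)) else 0)"

definition Dinv :: "nat \<Rightarrow> real mat" where
  "Dinv n = mat n n (\<lambda>(i, j). if Suc i dvd Suc j
      then (1 / real (fib (Suc j))) * real_of_int (moebius (Suc j div Suc i)) else 0)"

end

theory Submission
  imports Defs
begin

text \<open>Both matrices vanish off the divisibility relation of \<open>{1..n}\<close>, so the entry \<open>(i, j)\<close> of
  either product is a sum over the divisor interval \<open>{k. i dvd k \<and> k dvd j}\<close>. The Fibonacci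
  factors cancel (in one order) or factor out as \<open>F\<^sub>i / F\<^sub>j\<close> (in the other), and what remains is
  the divisor sum of \<open>\<mu>\<close> over \<open>j / i\<close>, which is \<open>1\<close> if \<open>i = j\<close> and \<open>0\<close> otherwise. That divisor sum
  is computed by identifying the squarefree divisors of \<open>m\<close> with the sets of prime factors of
  \<open>m\<close>, so it becomes \<open>\<Sum>X \<subseteq> prime_factors m. (-1)^|X|\<close>.\<close>

lemma alternating_sum_Pow:
  assumes "finite A" "A \<noteq> {}"
  shows "(\<Sum>X\<in>Pow A. (-1::int) ^ card X) = 0"
proof -
  have "(\<Prod>x\<in>A. (1::int) - 1) = (\<Sum>X\<in>Pow A. (-1) ^ card X * (\<Prod>x\<in>X. 1) * (\<Prod>x\<in>A-X. 1))"
    by (rule prod_diff_conv_sum[OF assms(1)])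
  moreover have "(\<Prod>x\<in>A. (1::int) - 1) = 0"
    using assms by (simp add: card_gt_0_iff)
  ultimately show ?thesis
    by simp
qed

lemma
  fixes S :: "nat set"
  assumes "finite S" "\<And>p. p \<in> S \<Longrightarrow> prime p"
  shows prime_factorization_prod_primes: "prime_factorization (\<Prod>S) = mset_set S"
    and squarefree_prod_primes: "squarefree (\<Prod>S)"
proof -
  show "prime_factorization (\<Prod>S) = mset_set S"
    using prime_factorization_prod_mset_primes[of "mset_set S"] assms
    by (simp add: prod_unfold_prod_mset)
  show "squarefree (\<Prod>S)"
    using assms by (intro squarefree_prod_coprime) (auto intro: primes_coprime squarefree_prime)
qed

lemma prod_prime_factors_squarefree:
  fixes d :: nat
  assumes "squarefree d"
  shows "\<Prod>(prime_factors d) = d"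
proof -
  have "d \<noteq> 0"
    using assms by (metis not_squarefree_0)
  then have "d = (\<Prod>p\<in>prime_factors d. p ^ multiplicity p d)"
    by (simp add: prod_prime_factors)
  also have "\<dots> = \<Prod>(prime_factors d)"
    using assms \<open>d \<noteq> 0\<close> squarefree_factorial_semiring'[OF \<open>d \<noteq> 0\<close>] by (intro prod.cong) auto
  finally show ?thesis by simp
qed

lemma squarefree_divisors_eq_image_Pow:
  fixes m :: nat
  assumes "m > 0"
  shows "{d. d dvd m \<and> squarefree d} = Prod ` Pow (prime_factors m)"
proof (intro equalityI subsetI)
  fix d assume "d \<in> {d. d dvd m \<and> squarefree d}"
  then have "d = \<Prod>(prime_factors d)" "prime_factors d \<subseteq> prime_factors m"
    using assms dvd_prime_factors[of m d] by (simp_all add: prod_prime_factors_squarefree)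
  then show "d \<in> Prod ` Pow (prime_factors m)"
    by blast
next
  fix d assume "d \<in> Prod ` Pow (prime_factors m)"
  then obtain S where S: "S \<subseteq> prime_factors m" and d: "d = \<Prod>S"
    by blast
  have "finite S" "\<And>p. p \<in> S \<Longrightarrow> prime p"
    using S finite_subset by auto
  moreover from this have "d \<noteq> 0"
    using d by (metis not_prime_0 prod_zero_iff)
  moreover have "mset_set S \<subseteq># prime_factorization m"
    using S by (metis finite_set_mset mset_set_set_mset_msubset subset_imp_msubset_mset_set
        subset_mset.order_trans)
  ultimately show "d \<in> {d. d dvd m \<and> squarefree d}"
    using assms d prime_factorization_subset_iff_dvd[of d m]
    by (simp add: prime_factorization_prod_primes squarefree_prod_primes)
qed

lemma moebius_divisor_sum:
  fixes m :: nat
  assumes "m > 0"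
  shows "(\<Sum>d | d dvd m. moebius d) = (if m = 1 then 1 else 0)"
proof -
  let ?P = "prime_factors m"
  have prime_P: "finite S" "\<And>p. p \<in> S \<Longrightarrow> prime p" if "S \<in> Pow ?P" for S
    using that finite_subset by auto
  have "(\<Sum>d | d dvd m. moebius d) = (\<Sum>d | d dvd m \<and> squarefree d. moebius d)"
    using assms by (intro sum.mono_neutral_right) (auto simp: moebius_def)
  also have "\<dots> = (\<Sum>d \<in> Prod ` Pow ?P. moebius d)"
    using assms by (simp add: squarefree_divisors_eq_image_Pow)
  also have "\<dots> = (\<Sum>S \<in> Pow ?P. moebius (\<Prod>S))"
  proof (rule sum.reindex_cong)
    show "inj_on Prod (Pow ?P)"
      by (rule inj_on_inverseI[where g = prime_factors])
        (simp add: prime_P prime_factorization_prod_primes)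
  qed simp_all
  also have "\<dots> = (\<Sum>S \<in> Pow ?P. (-1) ^ card S)"
    using prime_P
    by (intro sum.cong) (simp_all add: moebius_def prime_factorization_prod_primes squarefree_prod_primes)
  also have "\<dots> = (if m = 1 then 1 else 0)"
  proof (cases "m = 1")
    case False
    then have "?P \<noteq> {}"
      using assms by (metis prime_factorization_empty_iff set_mset_eq_empty_iff not_gr0 nat_dvd_1_iff_1)
    then show ?thesis
      using False alternating_sum_Pow[of ?P] by simp
  qed simp
  finally show ?thesis .
qed

lemma moebius_cofactor_divisor_sum:
  fixes m :: nat
  assumes "m > 0"
  shows "(\<Sum>d | d dvd m. moebius (m div d)) = (if m = 1 then 1 else 0)"
proof -
  have "(\<Sum>d | d dvd m. moebius (m div d)) = (\<Sum>d | d dvd m. moebius d)"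
    using assms by (intro sum.reindex_bij_witness[of _ "(div) m" "(div) m"]) (auto elim: dvdE)
  with moebius_divisor_sum[OF assms] show ?thesis
    by simp
qed

lemma sum_divisor_interval:
  fixes a b :: nat
  assumes "a > 0" "a dvd b"
  shows "(\<Sum>k | a dvd k \<and> k dvd b. f k) = (\<Sum>e | e dvd b div a. f (a * e))"
proof -
  have "{k. a dvd k \<and> k dvd b} = (*) a ` {e. e dvd b div a}"
    using assms by (auto elim!: dvdE simp: image_iff)
  moreover have "inj_on ((*) a) {e. e dvd b div a}"
    using assms by (auto intro: inj_onI)
  ultimately show ?thesis
    by (simp add: sum.reindex)
qed

lemma moebius_sum_divisor_interval:
  fixes i j :: nat
  assumes "i > 0" "j > 0" "i dvd j"
  shows "(\<Sum>k | i dvd k \<and> k dvd j. moebius (k div i)) = (if i = j then 1 else 0)"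
proof -
  have "j div i > 0" "(j div i = 1) = (i = j)"
    using assms by (auto elim!: dvdE)
  then show ?thesis
    using assms by (simp add: sum_divisor_interval moebius_divisor_sum)
qed

lemma moebius_cofactor_sum_divisor_interval:
  fixes i j :: nat
  assumes "i > 0" "j > 0" "i dvd j"
  shows "(\<Sum>k | i dvd k \<and> k dvd j. moebius (j div k)) = (if i = j then 1 else 0)"
proof -
  have "j div i > 0" "(j div i = 1) = (i = j)"
    using assms by (auto elim!: dvdE)
  moreover have "j div (i * e) = j div i div e" for e
    by (simp add: div_mult2_eq)
  ultimately show ?thesis
    using assms by (simp add: sum_divisor_interval moebius_cofactor_divisor_sum)
qed

text \<open>The incidence algebra of the divisibility order on \<open>{1..n}\<close>, indexed 0-based like \<open>Dmat\<close>.\<close>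

definition dvd_mat :: "nat \<Rightarrow> (nat \<Rightarrow> nat \<Rightarrow> 'a :: zero) \<Rightarrow> 'a mat" where
  "dvd_mat n a = mat n n (\<lambda>(i, j). if Suc i dvd Suc j then a (Suc i) (Suc j) else 0)"

lemma dvd_mat_cong:
  assumes "\<And>i j. 0 < i \<Longrightarrow> 0 < j \<Longrightarrow> i dvd j \<Longrightarrow> a i j = b i j"
  shows "dvd_mat n a = dvd_mat n b"
  using assms by (auto simp: dvd_mat_def)

lemma one_mat_eq_dvd_mat: "1\<^sub>m n = dvd_mat n (\<lambda>i j. if i = j then 1 else 0)"
  by (auto simp: dvd_mat_def)

lemma sum_lessThan_divisor_interval:
  fixes g :: "nat \<Rightarrow> 'a :: comm_monoid_add"
  assumes "j < n"
  shows "(\<Sum>k<n. if Suc i dvd Suc k \<and> Suc k dvd Suc j then g (Suc k) else 0)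
       = (\<Sum>k | Suc i dvd k \<and> k dvd Suc j. g k)"
proof -
  have "(\<Sum>k<n. if Suc i dvd Suc k \<and> Suc k dvd Suc j then g (Suc k) else 0)
      = (\<Sum>k\<in>{1..n}. if Suc i dvd k \<and> k dvd Suc j then g k else 0)"
    by (simp add: sum.atLeast1_atMost_eq)
  also have "\<dots> = (\<Sum>k\<in>{k\<in>{1..n}. Suc i dvd k \<and> k dvd Suc j}. g k)"
    by (rule sum.inter_filter[symmetric]) simp
  also have "{k\<in>{1..n}. Suc i dvd k \<and> k dvd Suc j} = {k. Suc i dvd k \<and> k dvd Suc j}"
  proof -
    have "k \<in> {1..n}" if "k dvd Suc j" for k
      using assms dvd_imp_le[OF that] dvd_pos_nat[OF _ that] by simp
    then show ?thesis
      by blast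
  qed
  finally show ?thesis .
qed

lemma dvd_mat_mult:
  fixes a b :: "nat \<Rightarrow> nat \<Rightarrow> 'a :: semiring_0"
  shows "dvd_mat n a * dvd_mat n b = dvd_mat n (\<lambda>i j. \<Sum>k | i dvd k \<and> k dvd j. a i k * b k j)"
proof (rule eq_matI)
  fix i j assume "i < dim_row (dvd_mat n (\<lambda>i j. \<Sum>k | i dvd k \<and> k dvd j. a i k * b k j))"
    and "j < dim_col (dvd_mat n (\<lambda>i j. \<Sum>k | i dvd k \<and> k dvd j. a i k * b k j))"
  then have "i < n" "j < n"
    by (simp_all add: dvd_mat_def)
  then have "(dvd_mat n a * dvd_mat n b) $$ (i, j)
      = (\<Sum>k<n. if Suc i dvd Suc k \<and> Suc k dvd Suc j then a (Suc i) (Suc k) * b (Suc k) (Suc j) else 0)"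
    by (auto simp: dvd_mat_def scalar_prod_def atLeast0LessThan intro: sum.cong)
  also have "\<dots> = (\<Sum>k | Suc i dvd k \<and> k dvd Suc j. a (Suc i) k * b k (Suc j))"
    using \<open>j < n\<close> by (rule sum_lessThan_divisor_interval)
  also have "\<dots> = dvd_mat n (\<lambda>i j. \<Sum>k | i dvd k \<and> k dvd j. a i k * b k j) $$ (i, j)"
  proof (cases "Suc i dvd Suc j")
    case False
    then have no_divisors: "{k. Suc i dvd k \<and> k dvd Suc j} = {}"
      by (auto dest: dvd_trans)
    show ?thesis
      using False \<open>i < n\<close> \<open>j < n\<close> by (simp add: dvd_mat_def no_divisors)
  qed (use \<open>i < n\<close> \<open>j < n\<close> in \<open>simp add: dvd_mat_def\<close>)
  finally show "(dvd_mat n a * dvd_mat n b) $$ (i, j)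
      = dvd_mat n (\<lambda>i j. \<Sum>k | i dvd k \<and> k dvd j. a i k * b k j) $$ (i, j)" .
qed (simp_all add: dvd_mat_def)

lemma Dmat_eq_dvd_mat: "Dmat n = dvd_mat n (\<lambda>i j. real (fib i))"
  unfolding Dmat_def dvd_mat_def by (rule refl)

lemma Dinv_eq_dvd_mat: "Dinv n = dvd_mat n (\<lambda>i j. 1 / real (fib j) * real_of_int (moebius (j div i)))"
  unfolding Dinv_def dvd_mat_def by (rule refl)

lemma Dmat_mult_Dinv: "Dmat n * Dinv n = 1\<^sub>m n"
proof -
  have "(\<Sum>k | i dvd k \<and> k dvd j. real (fib i) * (1 / real (fib j) * real_of_int (moebius (j div k))))
      = (if i = j then 1 else 0)" if "0 < i" "0 < j" "i dvd j" for i j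
  proof -
    have "(\<Sum>k | i dvd k \<and> k dvd j. real (fib i) * (1 / real (fib j) * real_of_int (moebius (j div k))))
        = real (fib i) / real (fib j) * real_of_int (\<Sum>k | i dvd k \<and> k dvd j. moebius (j div k))"
      by (simp add: sum_distrib_left)
    then show ?thesis
      using that fib_neq_0_nat[of j] by (simp add: moebius_cofactor_sum_divisor_interval)
  qed
  then show ?thesis
    unfolding Dmat_eq_dvd_mat Dinv_eq_dvd_mat dvd_mat_mult one_mat_eq_dvd_mat
    by (intro dvd_mat_cong)
qed

lemma Dinv_mult_Dmat: "Dinv n * Dmat n = 1\<^sub>m n"
proof -
  have "(\<Sum>k | i dvd k \<and> k dvd j. 1 / real (fib k) * real_of_int (moebius (k div i)) * real (fib k))
      = (if i = j then 1 else 0)" if "0 < i" "0 < j" "i dvd j" for i j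
  proof -
    have "(\<Sum>k | i dvd k \<and> k dvd j. 1 / real (fib k) * real_of_int (moebius (k div i)) * real (fib k))
        = real_of_int (\<Sum>k | i dvd k \<and> k dvd j. moebius (k div i))"
      unfolding of_int_sum using fib_neq_0_nat[OF dvd_pos_nat[OF \<open>0 < j\<close>]]
      by (intro sum.cong) auto
    then show ?thesis
      using that by (simp add: moebius_sum_divisor_interval)
  qed
  then show ?thesis
    unfolding Dmat_eq_dvd_mat Dinv_eq_dvd_mat dvd_mat_mult one_mat_eq_dvd_mat
    by (intro dvd_mat_cong)
qed

theorem lemma1:
  fixes n :: nat
  assumes "n \<ge> 1"
  shows "invertible_mat (Dmat n) \<and> Dmat n * Dinv n = 1\<^sub>m n \<and> Dinv n * Dmat n = 1\<^sub>m n"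
proof -
  have "dim_row (Dmat n) = n" "dim_col (Dmat n) = n" "dim_row (Dinv n) = n"
    by (simp_all add: Dmat_def Dinv_def)
  then show ?thesis
    using Dmat_mult_Dinv Dinv_mult_Dmat unfolding invertible_mat_def inverts_mat_def
    by (auto intro!: exI[of _ "Dinv n"])
qed

end
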